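(* Let $(X,d)$ be a complete metric space, $\lambda$ a convex mean on $X$, and $\nu$ a 2-mean on $X$ that is nonexpansive and coordinatewise $\rho'$-contractive for some $0<\rho'<1$. Then the iterated composition $\lambda*\nu$ (resp. the skewed iterated composition $\lambda*_s\nu$) exists and is nonexpansive and coordinatewise $\rho$-contractive, where $\rho=\max\{1/2,\rho'\}$; hence it $\beta$-extends to all orders greater than two (there are $n$-means $\mu_n$, $n\ge3$, with $\mu_3$ a $\beta$-extension of it and $\mu_{n+1}$ a $\beta$-extension of $\mu_n$).
   Context: A $k$-mean is a map $\mu:X^k\to X$ with $\mu(x,\ldots,x)=x$. A convex mean is a symmetric 2-mean $\lambda$ with $d(\lambda(x,z),\lambda(y,z))\le\frac12 d(x,y)$. Nonexpansive: $d(\mu(\mathbf{x}),\mu(\mathbf{y}))\le\max_j d(x_j,y_j)$; coordinatewise $\rho$-contractive: $d(\mu(\mathbf{x}),\mu(\mathbf{y}))\le\rho\,d(x_j,y_j)$ whenever $\mathbf{x},\mathbf{y}$ differ only in coordinate $j$. Iterated composition: $\lambda_1=\lambda$, $\nu_1=\nu$, $\lambda_{n+1}(x,y)=\lambda(\lambda_n(x,y),\nu_n(x,y))$, $\nu_{n+1}(x,y)=\nu(\lambda_n(x,y),\nu_n(x,y))$; skewed: $\nu_{n+1}(x,y)=\nu(\lambda_n(x,y),\nu_n(x,y))$, $\lambda_{n+1}(x,y)=\lambda(\lambda_n(x,y),\nu_{n+1}(x,y))$; the (skewed) iterated composition is the 2-mean $\mu(x,y)=\lim_n\lambda_n(x,y)=\lim_n\nu_n(x,y)$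 when these limits exist and agree. Barycentric operator of a $k$-mean: $\beta(\mathbf{x})_j=\mu(x_1,\ldots,\widehat{x_j},\ldots,x_{k+1})$; a $(k+1)$-mean $\nu'$ $\beta$-extends $\mu$ if $\beta^m(\mathbf{x})\to(\nu'(\mathbf{x}),\ldots,\nu'(\mathbf{x}))$ for all $\mathbf{x}$. *)

theory Defs
  imports "HOL-Analysis.Analysis"
begin

(* A complete metric space is modelled by a type of class complete_space. *)

definition mean2 :: "('a \<Rightarrow> 'a \<Rightarrow> 'a) \<Rightarrow> bool" where
  "mean2 mu \<longleftrightarrow> (\<forall>x. mu x x = x)"

definition convex_mean :: "('a::metric_space \<Rightarrow> 'a \<Rightarrow> 'a) \<Rightarrow> bool" where
  "convex_mean lam \<longleftrightarrow> mean2 lam \<and> (\<forall>x y. lam x y = lam y x) \<and>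
     (\<forall>x y z. dist (lam x z) (lam y z) \<le> dist x y / 2)"

definition nonexpansive2 :: "('a::metric_space \<Rightarrow> 'a \<Rightarrow> 'a) \<Rightarrow> bool" where
  "nonexpansive2 mu \<longleftrightarrow>
     (\<forall>x1 x2 y1 y2. dist (mu x1 x2) (mu y1 y2) \<le> max (dist x1 y1) (dist x2 y2))"

definition coord_contractive2 :: "real \<Rightarrow> ('a::metric_space \<Rightarrow> 'a \<Rightarrow> 'a) \<Rightarrow> bool" where
  "coord_contractive2 \<rho> mu \<longleftrightarrow>
     (\<forall>x y z. dist (mu x z) (mu y z) \<le> \<rho> * dist x y \<and> dist (mu z x) (mu z y) \<le> \<rho> * dist x y)"

(* itcomp lam nu n x y = (lambda_{n+1}(x,y), nu_{n+1}(x,y)) *)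
fun itcomp :: "('a \<Rightarrow> 'a \<Rightarrow> 'a) \<Rightarrow> ('a \<Rightarrow> 'a \<Rightarrow> 'a) \<Rightarrow> nat \<Rightarrow> 'a \<Rightarrow> 'a \<Rightarrow> 'a \<times> 'a" where
  "itcomp lam nu 0 x y = (lam x y, nu x y)"
| "itcomp lam nu (Suc n) x y =
     (case itcomp lam nu n x y of (a, b) \<Rightarrow> (lam a b, nu a b))"

fun itcomp_skew :: "('a \<Rightarrow> 'a \<Rightarrow> 'a) \<Rightarrow> ('a \<Rightarrow> 'a \<Rightarrow> 'a) \<Rightarrow> nat \<Rightarrow> 'a \<Rightarrow> 'a \<Rightarrow> 'a \<times> 'a" where
  "itcomp_skew lam nu 0 x y = (lam x y, nu x y)"
| "itcomp_skew lam nu (Suc n) x y =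
     (case itcomp_skew lam nu n x y of (a, b) \<Rightarrow> (lam a (nu a b), nu a b))"

definition is_iter_limit :: "(nat \<Rightarrow> 'a \<Rightarrow> 'a \<Rightarrow> 'a \<times> 'a) \<Rightarrow> ('a::topological_space \<Rightarrow> 'a \<Rightarrow> 'a) \<Rightarrow> bool" where
  "is_iter_limit s mu \<longleftrightarrow>
     (\<forall>x y. (\<lambda>n. fst (s n x y)) \<longlonglongrightarrow> mu x y \<and> (\<lambda>n. snd (s n x y)) \<longlonglongrightarrow> mu x y)"

(* k-means as functions on lists of length k *)
definition kmean :: "nat \<Rightarrow> ('a list \<Rightarrow> 'a) \<Rightarrow> bool" where
  "kmean k mu \<longleftrightarrow> (\<forall>x. mu (replicate k x) = x)"

definition barycentric :: "nat \<Rightarrow> ('a list \<Rightarrow> 'a) \<Rightarrow> 'a list \<Rightarrow> 'a list" where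
  "barycentric k mu xs = map (\<lambda>j. mu (take j xs @ drop (Suc j) xs)) [0..<Suc k]"

definition beta_extends :: "nat \<Rightarrow> ('a::topological_space list \<Rightarrow> 'a) \<Rightarrow> ('a list \<Rightarrow> 'a) \<Rightarrow> bool" where
  "beta_extends k mu nu' \<longleftrightarrow> kmean (Suc k) nu' \<and>
     (\<forall>xs. length xs = Suc k \<longrightarrow>
        (\<forall>j<Suc k. (\<lambda>m. ((barycentric k mu ^^ m) xs) ! j) \<longlonglongrightarrow> nu' xs))"

definition list_of_mean2 :: "('a \<Rightarrow> 'a \<Rightarrow> 'a) \<Rightarrow> 'a list \<Rightarrow> 'a" where
  "list_of_mean2 mu xs = mu (xs ! 0) (xs ! 1)"

definition beta_extends_all :: "('a::topological_space \<Rightarrow> 'a \<Rightarrow> 'a) \<Rightarrow> bool" where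
  "beta_extends_all mu \<longleftrightarrow> (\<exists>M :: nat \<Rightarrow> 'a list \<Rightarrow> 'a.
     beta_extends 2 (list_of_mean2 mu) (M 3) \<and>
     (\<forall>n\<ge>3. beta_extends n (M n) (M (Suc n))))"

end

(*
  Both iterations contract the gap d(lambda_n, nu_n) by a factor rho < 1 while each component moves
  by at most that gap, so lambda_n and nu_n are Cauchy with a common limit.  Every lambda_n is built
  from lambda and nu by composition and hence is a nonexpansive, coordinatewise rho-contractive mean;
  both properties survive pointwise limits.

  For the beta-extension of a nonexpansive, coordinatewise r-contractive k-mean, the barycentric
  operator shrinks the length of the polygon x_1, ..., x_(k+1) by the factor r and moves each vertex by
  at most that length.  Hence all vertices of the iterates converge to one point, and the resulting
  (k+1)-mean is again nonexpansive and coordinatewise r-contractive, which allows induction on the order.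
*)
theory Submission
  imports Defs
begin

section \<open>Geometric convergence\<close>

lemma dist_le_sum_dist_Suc:
  fixes f :: "nat \<Rightarrow> 'a::metric_space"
  assumes "m \<le> n"
  shows "dist (f m) (f n) \<le> (\<Sum>t\<in>{m..<n}. dist (f t) (f (Suc t)))"
  using assms
proof (induction n rule: dec_induct)
  case base
  then show ?case by simp
next
  case (step n)
  have "dist (f m) (f (Suc n)) \<le> dist (f m) (f n) + dist (f n) (f (Suc n))"
    by (rule dist_triangle)
  also have "\<dots> \<le> (\<Sum>t\<in>{m..<Suc n}. dist (f t) (f (Suc t)))"
    using step by simp
  finally show ?case .
qed

lemma Cauchy_if_summable_dist_Suc:
  fixes f :: "nat \<Rightarrow> 'a::metric_space"
  assumes "summable (\<lambda>n. dist (f n) (f (Suc n)))"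
  shows "Cauchy f"
proof (rule metric_CauchyI)
  fix e :: real
  assume "0 < e"
  then obtain N where N: "\<forall>m\<ge>N. \<forall>n. norm (\<Sum>t\<in>{m..<n}. dist (f t) (f (Suc t))) < e"
    using assms unfolding summable_Cauchy by blast
  have close: "dist (f m) (f n) < e" if "N \<le> m" "m \<le> n" for m n
  proof -
    have "(\<Sum>t\<in>{m..<n}. dist (f t) (f (Suc t))) < e"
      using N that(1) by (auto simp: sum_nonneg)
    then show ?thesis
      using dist_le_sum_dist_Suc[OF that(2), of f] by linarith
  qed
  show "\<exists>M. \<forall>m\<ge>M. \<forall>n\<ge>M. dist (f m) (f n) < e"
  proof (intro exI allI impI)
    fix m n
    assume "N \<le> m" "N \<le> n"
    then show "dist (f m) (f n) < e"
      using close[of m n] close[of n m] by (cases "m \<le> n") (simp_all add: dist_commute)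
  qed
qed

lemma convergent_if_dist_Suc_le_geometric:
  fixes f :: "nat \<Rightarrow> 'a::complete_space"
  assumes "\<And>n. dist (f n) (f (Suc n)) \<le> C * r ^ n" and "0 \<le> r" "r < 1"
  shows "convergent f"
proof -
  have "summable (\<lambda>n. C * r ^ n)"
    using assms(2,3) by (intro summable_mult summable_geometric) simp
  then have "summable (\<lambda>n. dist (f n) (f (Suc n)))"
    by (rule summable_comparison_test') (use assms(1) in simp)
  then show ?thesis
    by (intro Cauchy_convergent Cauchy_if_summable_dist_Suc)
qed

lemma LIMSEQ_zero_if_le_geometric:
  fixes g :: "nat \<Rightarrow> real"
  assumes "\<And>n. 0 \<le> g n" "\<And>n. g n \<le> C * r ^ n" and "0 \<le> r" "r < 1"
  shows "g \<longlonglongrightarrow> 0"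
proof (rule tendsto_sandwich[OF _ _ tendsto_const])
  show "(\<lambda>n. C * r ^ n) \<longlonglongrightarrow> 0"
    using assms(3,4) by (intro tendsto_mult_right_zero LIMSEQ_power_zero) simp
qed (use assms(1,2) in simp_all)

lemma tendsto_transform_dist:
  fixes f g :: "'b \<Rightarrow> 'a::metric_space"
  assumes "(f \<longlongrightarrow> l) F" and "((\<lambda>x. dist (g x) (f x)) \<longlongrightarrow> 0) F"
  shows "(g \<longlongrightarrow> l) F"
proof -
  have "((\<lambda>x. dist (f x) l) \<longlongrightarrow> 0) F"
    using assms(1) by (rule tendsto_dist_iff[THEN iffD1])
  then have sum: "((\<lambda>x. dist (g x) (f x) + dist (f x) l) \<longlongrightarrow> 0) F"
    using tendsto_add[OF assms(2)] by simp
  have "((\<lambda>x. dist (g x) l) \<longlongrightarrow> 0) F"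
    by (rule tendsto_sandwich[OF _ _ tendsto_const sum]) (simp_all add: dist_triangle)
  then show ?thesis
    by (rule tendsto_dist_iff[THEN iffD2])
qed

lemma common_limit_if_gap_contracts:
  fixes a b :: "nat \<Rightarrow> 'a::complete_space"
  assumes gap: "\<And>n. dist (a (Suc n)) (b (Suc n)) \<le> r * dist (a n) (b n)"
    and move_a: "\<And>n. dist (a n) (a (Suc n)) \<le> dist (a n) (b n)"
    and move_b: "\<And>n. dist (b n) (b (Suc n)) \<le> dist (a n) (b n)"
    and "0 \<le> r" "r < 1"
  shows "\<exists>l. a \<longlonglongrightarrow> l \<and> b \<longlonglongrightarrow> l"
proof -
  have gap_le: "dist (a n) (b n) \<le> dist (a 0) (b 0) * r ^ n" for n
  proof (induction n)
    case (Suc n)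
    have "dist (a (Suc n)) (b (Suc n)) \<le> r * dist (a n) (b n)"
      by (rule gap)
    also have "\<dots> \<le> r * (dist (a 0) (b 0) * r ^ n)"
      using Suc \<open>0 \<le> r\<close> by (rule mult_left_mono)
    finally show ?case
      by (simp add: algebra_simps)
  qed simp
  have "dist (a n) (a (Suc n)) \<le> dist (a 0) (b 0) * r ^ n" for n
    using move_a[of n] gap_le[of n] by linarith
  then have "convergent a"
    using \<open>0 \<le> r\<close> \<open>r < 1\<close> by (rule convergent_if_dist_Suc_le_geometric)
  then obtain l where "a \<longlonglongrightarrow> l"
    by (auto simp: convergent_def)
  moreover have "(\<lambda>n. dist (b n) (a n)) \<longlonglongrightarrow> 0"
    using gap_le \<open>0 \<le> r\<close> \<open>r < 1\<close>
    by (intro LIMSEQ_zero_if_le_geometric) (simp_all add: dist_commute)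
  ultimately have "b \<longlonglongrightarrow> l"
    by (rule tendsto_transform_dist)
  with \<open>a \<longlonglongrightarrow> l\<close> show ?thesis
    by blast
qed

section \<open>Iterated composition of contractive 2-means\<close>

definition contractive_mean2 :: "real \<Rightarrow> ('a::metric_space \<Rightarrow> 'a \<Rightarrow> 'a) \<Rightarrow> bool" where
  "contractive_mean2 r mu \<longleftrightarrow> mean2 mu \<and> nonexpansive2 mu \<and> coord_contractive2 r mu"

lemma convex_mean_imp_contractive_mean2:
  assumes "convex_mean lam"
  shows "contractive_mean2 (1/2) lam"
proof -
  have half: "dist (lam x z) (lam y z) \<le> dist x y / 2" and sym: "lam x y = lam y x" for x y z
    using assms by (auto simp: convex_mean_def)
  have "dist (lam x1 x2) (lam y1 y2) \<le> max (dist x1 y1) (dist x2 y2)" for x1 x2 y1 y2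
  proof -
    have "dist (lam x1 x2) (lam y1 y2) \<le> dist (lam x1 x2) (lam y1 x2) + dist (lam x2 y1) (lam y2 y1)"
      using dist_triangle[of "lam x1 x2" "lam y1 y2" "lam y1 x2"] by (simp add: sym)
    also have "\<dots> \<le> dist x1 y1 / 2 + dist x2 y2 / 2"
      using half[of x1 x2 y1] half[of x2 y1 y2] by linarith
    finally show ?thesis
      by linarith
  qed
  moreover have "dist (lam z x) (lam z y) \<le> 1/2 * dist x y" for x y z
    using half[of x z y] by (simp add: sym)
  ultimately show ?thesis
    using assms half
    by (auto simp: contractive_mean2_def convex_mean_def nonexpansive2_def coord_contractive2_def)
qed

lemma contractive_mean2_mono:
  assumes "contractive_mean2 r mu" and "r \<le> r'"
  shows "contractive_mean2 r' mu"
proof -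
  have "r * dist x y \<le> r' * dist x y" for x y :: 'a
    using assms(2) by (rule mult_right_mono) simp
  with assms(1) show ?thesis
    unfolding contractive_mean2_def coord_contractive2_def by (meson order_trans)
qed

lemma contractive_mean2_compose:
  assumes "contractive_mean2 r h" "contractive_mean2 r f" "contractive_mean2 r g"
  shows "contractive_mean2 r (\<lambda>x y. h (f x y) (g x y))"
proof -
  have h: "dist (h a b) (h a' b') \<le> max (dist a a') (dist b b')" for a b a' b'
    using assms(1) by (simp add: contractive_mean2_def nonexpansive2_def)
  have "nonexpansive2 (\<lambda>x y. h (f x y) (g x y))"
    unfolding nonexpansive2_def
    using assms(2,3) by (auto simp: contractive_mean2_def nonexpansive2_def intro: order_trans[OF h])
  moreover have "coord_contractive2 r (\<lambda>x y. h (f x y) (g x y))"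
    unfolding coord_contractive2_def
    using assms(2,3) by (auto simp: contractive_mean2_def coord_contractive2_def intro: order_trans[OF h])
  ultimately show ?thesis
    using assms by (simp add: contractive_mean2_def mean2_def)
qed

lemma mean2_dist_le_max:
  assumes "mean2 mu" "nonexpansive2 mu"
  shows "dist (mu a b) c \<le> max (dist a c) (dist b c)"
  using assms unfolding mean2_def nonexpansive2_def by metis

lemma contractive_mean2_dist_le:
  assumes "contractive_mean2 r mu"
  shows "dist a (mu a b) \<le> r * dist a b" and "dist b (mu a b) \<le> r * dist a b"
proof -
  have diag: "mu a a = a" "mu b b = b"
    and contr: "dist (mu x z) (mu y z) \<le> r * dist x y" "dist (mu z x) (mu z y) \<le> r * dist x y" for x y z
    using assms by (simp_all add: contractive_mean2_def mean2_def coord_contractive2_def)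
  show "dist a (mu a b) \<le> r * dist a b"
    using contr(2)[where z = a and x = a and y = b] by (simp add: diag)
  show "dist b (mu a b) \<le> r * dist a b"
    using contr(1)[where x = b and y = a and z = b] by (simp add: diag dist_commute)
qed

lemma contractive_mean2_pointwise_limit:
  assumes lim: "\<And>x y. (\<lambda>n. F n x y) \<longlonglongrightarrow> mu x y"
    and F: "\<And>n. contractive_mean2 r (F n)"
  shows "contractive_mean2 r mu"
proof -
  have le: "dist (mu x y) (mu x' y') \<le> c" if "\<And>n. dist (F n x y) (F n x' y') \<le> c" for x y x' y' c
    using tendsto_dist[OF lim lim] by (rule LIMSEQ_le_const2) (use that in blast)
  have "mean2 mu"
    using LIMSEQ_unique[OF lim] F by (simp add: contractive_mean2_def mean2_def)
  moreover have "nonexpansive2 mu"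
    using F unfolding contractive_mean2_def nonexpansive2_def by (blast intro: le)
  moreover have "coord_contractive2 r mu"
    using F unfolding contractive_mean2_def coord_contractive2_def by (blast intro: le)
  ultimately show ?thesis
    by (simp add: contractive_mean2_def)
qed

lemma iter_limit_if_gap_contracts:
  fixes s :: "nat \<Rightarrow> 'a::complete_space \<Rightarrow> 'a \<Rightarrow> 'a \<times> 'a" and f g :: "'a \<Rightarrow> 'a \<Rightarrow> 'a"
  assumes s_Suc: "\<And>n x y. s (Suc n) x y =
      (f (fst (s n x y)) (snd (s n x y)), g (fst (s n x y)) (snd (s n x y)))"
    and gap: "\<And>a b. dist (f a b) (g a b) \<le> r * dist a b"
    and move_f: "\<And>a b. dist a (f a b) \<le> dist a b"
    and move_g: "\<And>a b. dist b (g a b) \<le> dist a b"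
    and "0 \<le> r" "r < 1"
    and fst_mean: "\<And>n. contractive_mean2 r (\<lambda>x y. fst (s n x y))"
  shows "\<exists>mu. is_iter_limit s mu \<and> contractive_mean2 r mu"
proof -
  have common_limit: "\<exists>l. (\<lambda>n. fst (s n x y)) \<longlonglongrightarrow> l \<and> (\<lambda>n. snd (s n x y)) \<longlonglongrightarrow> l" for x y
    by (rule common_limit_if_gap_contracts[where r = r]) (simp_all add: s_Suc gap move_f move_g assms(5,6))
  define mu where "mu x y = lim (\<lambda>n. fst (s n x y))" for x y
  have lim: "(\<lambda>n. fst (s n x y)) \<longlonglongrightarrow> mu x y \<and> (\<lambda>n. snd (s n x y)) \<longlonglongrightarrow> mu x y" for x y
  proof -
    obtain l where l: "(\<lambda>n. fst (s n x y)) \<longlonglongrightarrow> l" "(\<lambda>n. snd (s n x y)) \<longlonglongrightarrow> l"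
      using common_limit by blast
    have "mu x y = l"
      unfolding mu_def using l(1) by (rule limI)
    with l show ?thesis
      by simp
  qed
  then have "is_iter_limit s mu"
    by (simp add: is_iter_limit_def)
  moreover have "contractive_mean2 r mu"
  proof (rule contractive_mean2_pointwise_limit)
    show "(\<lambda>n. fst (s n x y)) \<longlonglongrightarrow> mu x y" for x y
      using lim by simp
  qed (rule fst_mean)
  ultimately show ?thesis
    by blast
qed

lemma contractive_mean2_itcomp:
  assumes lam: "contractive_mean2 r lam" and nu: "contractive_mean2 r nu"
  shows "contractive_mean2 r (\<lambda>x y. fst (itcomp lam nu n x y)) \<and>
         contractive_mean2 r (\<lambda>x y. snd (itcomp lam nu n x y))"
proof (induction n)
  case 0
  then show ?case
    using assms by simp
next
  case (Suc n)
  let ?F = "\<lambda>x y. fst (itcomp lam nu n x y)" and ?G = "\<lambda>x y. snd (itcomp lam nu n x y)"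
  have F: "contractive_mean2 r ?F" and G: "contractive_mean2 r ?G"
    using Suc by simp_all
  show ?case
    using contractive_mean2_compose[OF lam F G] contractive_mean2_compose[OF nu F G]
    by (simp add: case_prod_beta)
qed

lemma contractive_mean2_itcomp_skew:
  assumes lam: "contractive_mean2 r lam" and nu: "contractive_mean2 r nu"
  shows "contractive_mean2 r (\<lambda>x y. fst (itcomp_skew lam nu n x y)) \<and>
         contractive_mean2 r (\<lambda>x y. snd (itcomp_skew lam nu n x y))"
proof (induction n)
  case 0
  then show ?case
    using assms by simp
next
  case (Suc n)
  let ?F = "\<lambda>x y. fst (itcomp_skew lam nu n x y)" and ?G = "\<lambda>x y. snd (itcomp_skew lam nu n x y)"
  have F: "contractive_mean2 r ?F" and G: "contractive_mean2 r ?G"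
    using Suc by simp_all
  have nu_step: "contractive_mean2 r (\<lambda>x y. nu (?F x y) (?G x y))"
    by (rule contractive_mean2_compose[OF nu F G])
  show ?case
    using contractive_mean2_compose[OF lam F nu_step] nu_step
    by (simp add: case_prod_beta)
qed

lemma itcomp_iter_limit:
  fixes lam nu :: "'a::complete_space \<Rightarrow> 'a \<Rightarrow> 'a"
  assumes lam: "contractive_mean2 r lam" and nu: "contractive_mean2 r nu" and "0 \<le> r" "r < 1"
  shows "\<exists>mu. is_iter_limit (itcomp lam nu) mu \<and> contractive_mean2 r mu"
proof (rule iter_limit_if_gap_contracts[where f = lam and g = nu])
  fix a b
  have lam_le: "dist (lam a b) c \<le> max (dist a c) (dist b c)" for c
    using lam by (simp add: contractive_mean2_def mean2_dist_le_max)
  have nu_le: "dist (nu a b) c \<le> max (dist a c) (dist b c)" for c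
    using nu by (simp add: contractive_mean2_def mean2_dist_le_max)
  show "dist (lam a b) (nu a b) \<le> r * dist a b"
    using lam_le[of "nu a b"] contractive_mean2_dist_le[OF nu, where a = a and b = b] by simp
  show "dist a (lam a b) \<le> dist a b"
    using lam_le[of a] by (simp add: dist_commute)
  show "dist b (nu a b) \<le> dist a b"
    using nu_le[of b] by (simp add: dist_commute)
next
  show "contractive_mean2 r (\<lambda>x y. fst (itcomp lam nu n x y))" for n
    using contractive_mean2_itcomp[OF lam nu] by blast
qed (simp_all add: assms case_prod_beta)

lemma itcomp_skew_iter_limit:
  fixes lam nu :: "'a::complete_space \<Rightarrow> 'a \<Rightarrow> 'a"
  assumes lam: "contractive_mean2 r lam" and nu: "contractive_mean2 r nu" and "0 \<le> r" "r < 1"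
  shows "\<exists>mu. is_iter_limit (itcomp_skew lam nu) mu \<and> contractive_mean2 r mu"
proof (rule iter_limit_if_gap_contracts[where f = "\<lambda>a b. lam a (nu a b)" and g = nu])
  fix a b
  let ?e = "nu a b"
  have lam_le: "dist (lam a ?e) c \<le> max (dist a c) (dist ?e c)" for c
    using lam by (simp add: contractive_mean2_def mean2_dist_le_max)
  have e_close: "dist a ?e \<le> r * dist a b" "dist b ?e \<le> r * dist a b"
    by (rule contractive_mean2_dist_le[OF nu])+
  have "r * dist a b \<le> dist a b"
    using \<open>0 \<le> r\<close> \<open>r < 1\<close> by (simp add: mult_left_le_one_le)
  have "dist a (lam a ?e) \<le> dist a ?e"
    using lam_le[of a] by (simp add: dist_commute)
  then show "dist a (lam a ?e) \<le> dist a b"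
    using e_close(1) \<open>r * dist a b \<le> dist a b\<close> by simp
  show "dist b ?e \<le> dist a b"
    using e_close(2) \<open>r * dist a b \<le> dist a b\<close> by simp
  show "dist (lam a ?e) ?e \<le> r * dist a b"
    using lam_le[of ?e] e_close(1) by simp
next
  show "contractive_mean2 r (\<lambda>x y. fst (itcomp_skew lam nu n x y))" for n
    using contractive_mean2_itcomp_skew[OF lam nu] by blast
qed (simp_all add: assms case_prod_beta)

section \<open>Barycentric extension to higher orders\<close>

definition remove_nth :: "nat \<Rightarrow> 'a list \<Rightarrow> 'a list" where
  "remove_nth j xs = take j xs @ drop (Suc j) xs"

lemma length_remove_nth [simp]: "j < length xs \<Longrightarrow> length (remove_nth j xs) = length xs - 1"
  by (simp add: remove_nth_def)

lemma nth_remove_nth: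
  "j < length xs \<Longrightarrow> i < length xs - 1 \<Longrightarrow> remove_nth j xs ! i = xs ! (if i < j then i else Suc i)"
  by (auto simp: remove_nth_def nth_append min_def)

lemma remove_nth_replicate: "j < n \<Longrightarrow> remove_nth j (replicate n x) = replicate (n - 1) x"
  by (rule nth_equalityI) (simp_all add: nth_remove_nth)

lemma remove_nth_list_update:
  assumes "j < length xs" "p < length xs"
  shows "remove_nth j (xs[p := y]) =
    (if p < j then (remove_nth j xs)[p := y]
     else if p = j then remove_nth j xs
     else (remove_nth j xs)[p - 1 := y])"
  using assms
  by (auto simp: remove_nth_def take_update_swap take_update_cancel drop_update_cancel
      drop_update_swap list_update_append list_update_beyond min_def)

lemma remove_nth_Suc:
  assumes "Suc i < length xs"
  shows "remove_nth (Suc i) xs = (remove_nth i xs)[i := xs ! i]"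
  using assms by (intro nth_equalityI) (auto simp: nth_remove_nth nth_list_update)

definition nonexpansive_list :: "nat \<Rightarrow> ('a::metric_space list \<Rightarrow> 'a) \<Rightarrow> bool" where
  "nonexpansive_list k mu \<longleftrightarrow> (\<forall>xs ys \<delta>. length xs = k \<longrightarrow> length ys = k \<longrightarrow>
     (\<forall>i<k. dist (xs ! i) (ys ! i) \<le> \<delta>) \<longrightarrow> dist (mu xs) (mu ys) \<le> \<delta>)"

definition coord_contractive_list :: "nat \<Rightarrow> real \<Rightarrow> ('a::metric_space list \<Rightarrow> 'a) \<Rightarrow> bool" where
  "coord_contractive_list k r mu \<longleftrightarrow> (\<forall>xs p y. length xs = k \<longrightarrow> p < k \<longrightarrow>
     dist (mu xs) (mu (xs[p := y])) \<le> r * dist (xs ! p) y)"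

definition contractive_kmean :: "nat \<Rightarrow> real \<Rightarrow> ('a::metric_space list \<Rightarrow> 'a) \<Rightarrow> bool" where
  "contractive_kmean k r mu \<longleftrightarrow> kmean k mu \<and> nonexpansive_list k mu \<and> coord_contractive_list k r mu"

lemma contractive_kmean_list_of_mean2:
  assumes "contractive_mean2 r mu"
  shows "contractive_kmean 2 r (list_of_mean2 mu)"
proof -
  have "kmean 2 (list_of_mean2 mu)"
    using assms by (simp add: contractive_mean2_def mean2_def kmean_def list_of_mean2_def numeral_2_eq_2)
  moreover have "nonexpansive_list 2 (list_of_mean2 mu)"
    unfolding nonexpansive_list_def
  proof (intro allI impI)
    fix xs ys :: "'a list" and \<delta> :: real
    assume "\<forall>i<2. dist (xs ! i) (ys ! i) \<le> \<delta>"
    then have "dist (xs ! 0) (ys ! 0) \<le> \<delta>" "dist (xs ! 1) (ys ! 1) \<le> \<delta>"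
      by simp_all
    moreover have "dist (mu (xs ! 0) (xs ! 1)) (mu (ys ! 0) (ys ! 1))
        \<le> max (dist (xs ! 0) (ys ! 0)) (dist (xs ! 1) (ys ! 1))"
      using assms by (simp add: contractive_mean2_def nonexpansive2_def)
    ultimately show "dist (list_of_mean2 mu xs) (list_of_mean2 mu ys) \<le> \<delta>"
      by (simp add: list_of_mean2_def)
  qed
  moreover have "coord_contractive_list 2 r (list_of_mean2 mu)"
    unfolding coord_contractive_list_def
  proof (intro allI impI)
    fix xs :: "'a list" and p :: nat and y :: 'a
    assume "length xs = 2" "p < 2"
    then consider "p = 0" | "p = 1"
      by linarith
    then show "dist (list_of_mean2 mu xs) (list_of_mean2 mu (xs[p := y])) \<le> r * dist (xs ! p) y"
      using assms \<open>length xs = 2\<close>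
      by cases (simp_all add: list_of_mean2_def contractive_mean2_def coord_contractive2_def)
  qed
  ultimately show ?thesis
    by (simp add: contractive_kmean_def)
qed

lemma length_barycentric [simp]: "length (barycentric k mu xs) = Suc k"
  by (simp add: barycentric_def)

lemma nth_barycentric: "j < Suc k \<Longrightarrow> barycentric k mu xs ! j = mu (remove_nth j xs)"
  by (simp add: barycentric_def remove_nth_def del: upt_Suc)

lemma length_funpow_barycentric [simp]:
  "length xs = Suc k \<Longrightarrow> length ((barycentric k mu ^^ m) xs) = Suc k"
  by (induction m) simp_all

lemma barycentric_replicate:
  assumes "kmean k mu"
  shows "barycentric k mu (replicate (Suc k) x) = replicate (Suc k) x"
  using assms
  by (intro nth_equalityI) (simp_all add: nth_barycentric remove_nth_replicate kmean_def del: replicate_Suc)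

lemma dist_barycentric_le:
  assumes "nonexpansive_list k mu" "length xs = Suc k" "length ys = Suc k"
    and "\<And>i. i < Suc k \<Longrightarrow> dist (xs ! i) (ys ! i) \<le> \<delta>" and "j < Suc k"
  shows "dist (barycentric k mu xs ! j) (barycentric k mu ys ! j) \<le> \<delta>"
proof -
  have "\<forall>i<k. dist (remove_nth j xs ! i) (remove_nth j ys ! i) \<le> \<delta>"
    using assms(2-5) by (simp add: nth_remove_nth)
  then have "dist (mu (remove_nth j xs)) (mu (remove_nth j ys)) \<le> \<delta>"
    using assms(1,2,3,5) unfolding nonexpansive_list_def by simp
  then show ?thesis
    using assms(5) by (simp add: nth_barycentric)
qed

lemma dist_funpow_barycentric_le:
  assumes "nonexpansive_list k mu" "length xs = Suc k" "length ys = Suc k"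
    and "\<And>i. i < Suc k \<Longrightarrow> dist (xs ! i) (ys ! i) \<le> \<delta>" and "j < Suc k"
  shows "dist ((barycentric k mu ^^ m) xs ! j) ((barycentric k mu ^^ m) ys ! j) \<le> \<delta>"
  using assms(5)
proof (induction m arbitrary: j)
  case 0
  then show ?case
    using assms(4) by simp
next
  case (Suc m)
  then show ?case
    using dist_barycentric_le[OF assms(1) length_funpow_barycentric[OF assms(2)]
        length_funpow_barycentric[OF assms(3)]]
    by simp
qed

lemma dist_barycentric_list_update_le:
  assumes "coord_contractive_list k r mu" "0 \<le> r" "length xs = Suc k" "p < Suc k" "j < Suc k"
  shows "dist (barycentric k mu xs ! j) (barycentric k mu (xs[p := y]) ! j) \<le> r * dist (xs ! p) y"
proof (cases "p = j")
  case True
  then show ?thesis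
    using assms by (simp add: nth_barycentric remove_nth_list_update)
next
  case False
  define q where "q = (if p < j then p else p - 1)"
  have update: "remove_nth j (xs[p := y]) = (remove_nth j xs)[q := y]"
    using False assms(3-5) by (simp add: remove_nth_list_update q_def)
  have "q < k" "remove_nth j xs ! q = xs ! p"
    using False assms(3-5) by (auto simp: q_def nth_remove_nth)
  then have "dist (mu (remove_nth j xs)) (mu ((remove_nth j xs)[q := y])) \<le> r * dist (xs ! p) y"
    using assms(1,3,5) unfolding coord_contractive_list_def by (metis length_remove_nth diff_Suc_1)
  then show ?thesis
    using assms(4,5) by (simp add: nth_barycentric update)
qed

definition chain_length :: "'a::metric_space list \<Rightarrow> real" where
  "chain_length xs = (\<Sum>i<length xs - 1. dist (xs ! i) (xs ! Suc i))"

lemma dist_nth_le_chain_length: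
  assumes "i < length xs" "j < length xs"
  shows "dist (xs ! i) (xs ! j) \<le> chain_length xs"
proof -
  have le: "dist (xs ! i) (xs ! j) \<le> chain_length xs" if "i \<le> j" "j < length xs" for i j
  proof -
    have "dist (xs ! i) (xs ! j) \<le> (\<Sum>t\<in>{i..<j}. dist (xs ! t) (xs ! Suc t))"
      using dist_le_sum_dist_Suc[of i j "\<lambda>t. xs ! t"] that(1) by simp
    also have "\<dots> \<le> (\<Sum>t<length xs - 1. dist (xs ! t) (xs ! Suc t))"
      using that by (intro sum_mono2) auto
    finally show ?thesis
      by (simp add: chain_length_def)
  qed
  show ?thesis
    using le[of i j] le[of j i] assms by (cases "i \<le> j") (simp_all add: dist_commute)
qed

lemma chain_length_barycentric_le:
  assumes "coord_contractive_list k r mu" "length xs = Suc k"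
  shows "chain_length (barycentric k mu xs) \<le> r * chain_length xs"
proof -
  have term_le: "dist (barycentric k mu xs ! i) (barycentric k mu xs ! Suc i) \<le> r * dist (xs ! i) (xs ! Suc i)"
    if "i < k" for i
  proof -
    have "dist (mu (remove_nth i xs)) (mu ((remove_nth i xs)[i := xs ! i]))
        \<le> r * dist (remove_nth i xs ! i) (xs ! i)"
      using assms that unfolding coord_contractive_list_def by simp
    moreover have "remove_nth i xs ! i = xs ! Suc i"
      using assms(2) that by (simp add: nth_remove_nth)
    ultimately show ?thesis
      using assms(2) that by (simp add: nth_barycentric remove_nth_Suc dist_commute)
  qed
  have "chain_length (barycentric k mu xs) \<le> (\<Sum>i<k. r * dist (xs ! i) (xs ! Suc i))"
    unfolding chain_length_def length_barycentric diff_Suc_1 by (intro sum_mono) (simp add: term_le)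
  then show ?thesis
    using assms(2) by (simp add: chain_length_def sum_distrib_left)
qed

lemma chain_length_funpow_barycentric_le:
  assumes "coord_contractive_list k r mu" "0 \<le> r" "length xs = Suc k"
  shows "chain_length ((barycentric k mu ^^ m) xs) \<le> chain_length xs * r ^ m"
proof (induction m)
  case (Suc m)
  have "chain_length ((barycentric k mu ^^ Suc m) xs) \<le> r * chain_length ((barycentric k mu ^^ m) xs)"
    using chain_length_barycentric_le[OF assms(1) length_funpow_barycentric[OF assms(3)]] by simp
  also have "\<dots> \<le> r * (chain_length xs * r ^ m)"
    using Suc \<open>0 \<le> r\<close> by (rule mult_left_mono)
  finally show ?case
    by (simp add: algebra_simps)
qed simp

lemma dist_barycentric_nth_le_chain_length:
  assumes "kmean k mu" "nonexpansive_list k mu" "length xs = Suc k" "j < Suc k"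
  shows "dist (barycentric k mu xs ! j) (xs ! j) \<le> chain_length xs"
proof -
  have "\<forall>i<k. dist (remove_nth j xs ! i) (replicate k (xs ! j) ! i) \<le> chain_length xs"
    using assms(3,4) by (simp add: nth_remove_nth dist_nth_le_chain_length)
  then have "dist (mu (remove_nth j xs)) (mu (replicate k (xs ! j))) \<le> chain_length xs"
    using assms(2-4) unfolding nonexpansive_list_def by simp
  then show ?thesis
    using assms(1,4) by (simp add: nth_barycentric kmean_def)
qed

definition beta_limit :: "nat \<Rightarrow> ('a::metric_space list \<Rightarrow> 'a) \<Rightarrow> 'a list \<Rightarrow> 'a" where
  "beta_limit k mu xs = lim (\<lambda>m. (barycentric k mu ^^ m) xs ! 0)"

lemma funpow_barycentric_tendsto_beta_limit:
  fixes mu :: "'a::complete_space list \<Rightarrow> 'a"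
  assumes mu: "contractive_kmean k r mu" and "0 \<le> r" "r < 1" and xs: "length xs = Suc k"
    and "j < Suc k"
  shows "(\<lambda>m. (barycentric k mu ^^ m) xs ! j) \<longlonglongrightarrow> beta_limit k mu xs"
proof -
  define y where "y m = (barycentric k mu ^^ m) xs" for m
  have len: "length (y m) = Suc k" for m
    using xs by (simp add: y_def)
  have shrink: "chain_length (y m) \<le> chain_length xs * r ^ m" for m
    using mu \<open>0 \<le> r\<close> xs unfolding y_def contractive_kmean_def
    by (simp add: chain_length_funpow_barycentric_le)
  have "dist (y m ! 0) (y (Suc m) ! 0) \<le> chain_length xs * r ^ m" for m
  proof -
    have "dist (barycentric k mu (y m) ! 0) (y m ! 0) \<le> chain_length (y m)"
      using mu len by (simp add: contractive_kmean_def dist_barycentric_nth_le_chain_length)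
    then show ?thesis
      using shrink[of m] by (simp add: y_def dist_commute)
  qed
  then have "convergent (\<lambda>m. y m ! 0)"
    using \<open>0 \<le> r\<close> \<open>r < 1\<close> by (rule convergent_if_dist_Suc_le_geometric)
  then have first: "(\<lambda>m. y m ! 0) \<longlonglongrightarrow> beta_limit k mu xs"
    unfolding beta_limit_def y_def by (simp add: convergent_LIMSEQ_iff)
  have "dist (y m ! j) (y m ! 0) \<le> chain_length xs * r ^ m" for m
    using dist_nth_le_chain_length[of j "y m" 0] len \<open>j < Suc k\<close> shrink[of m] by simp
  then have "(\<lambda>m. dist (y m ! j) (y m ! 0)) \<longlonglongrightarrow> 0"
    using \<open>0 \<le> r\<close> \<open>r < 1\<close> by (intro LIMSEQ_zero_if_le_geometric) simp_all
  with first have "(\<lambda>m. y m ! j) \<longlonglongrightarrow> beta_limit k mu xs"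
    by (rule tendsto_transform_dist)
  then show ?thesis
    by (simp add: y_def)
qed

lemma kmean_beta_limit:
  assumes "kmean k mu"
  shows "kmean (Suc k) (beta_limit k mu)"
proof -
  have "(barycentric k mu ^^ m) (replicate (Suc k) x) = replicate (Suc k) x" for m x
    using assms by (induction m) (simp_all add: barycentric_replicate del: replicate_Suc)
  then show ?thesis
    by (simp add: kmean_def beta_limit_def del: replicate_Suc)
qed

lemma beta_extends_beta_limit:
  fixes mu :: "'a::complete_space list \<Rightarrow> 'a"
  assumes "contractive_kmean k r mu" "0 \<le> r" "r < 1"
  shows "beta_extends k mu (beta_limit k mu)"
  unfolding beta_extends_def
proof (intro conjI allI impI)
  show "kmean (Suc k) (beta_limit k mu)"
    using assms(1) by (simp add: contractive_kmean_def kmean_beta_limit)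
  show "(\<lambda>m. (barycentric k mu ^^ m) xs ! j) \<longlonglongrightarrow> beta_limit k mu xs"
    if "length xs = Suc k" "j < Suc k" for xs j
    using assms that by (rule funpow_barycentric_tendsto_beta_limit)
qed

lemma dist_beta_limit_le:
  fixes mu :: "'a::complete_space list \<Rightarrow> 'a"
  assumes "contractive_kmean k r mu" "0 \<le> r" "r < 1" "length xs = Suc k" "length ys = Suc k"
    and "\<forall>\<^sub>F m in sequentially. dist ((barycentric k mu ^^ m) xs ! 0) ((barycentric k mu ^^ m) ys ! 0) \<le> c"
  shows "dist (beta_limit k mu xs) (beta_limit k mu ys) \<le> c"
proof (rule tendsto_upperbound)
  show "(\<lambda>m. dist ((barycentric k mu ^^ m) xs ! 0) ((barycentric k mu ^^ m) ys ! 0))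
      \<longlonglongrightarrow> dist (beta_limit k mu xs) (beta_limit k mu ys)"
    using assms(1-5)
    by (intro tendsto_dist funpow_barycentric_tendsto_beta_limit[where r = r]) simp_all
qed (use assms(6) in simp_all)

lemma nonexpansive_list_beta_limit:
  fixes mu :: "'a::complete_space list \<Rightarrow> 'a"
  assumes mu: "contractive_kmean k r mu" and r: "0 \<le> r" "r < 1"
  shows "nonexpansive_list (Suc k) (beta_limit k mu)"
  unfolding nonexpansive_list_def
proof (intro allI impI)
  fix xs ys :: "'a list" and \<delta> :: real
  assume xs: "length xs = Suc k" and ys: "length ys = Suc k"
    and close: "\<forall>i<Suc k. dist (xs ! i) (ys ! i) \<le> \<delta>"
  have ne: "nonexpansive_list k mu"
    using mu by (simp add: contractive_kmean_def)
  have "dist ((barycentric k mu ^^ m) xs ! 0) ((barycentric k mu ^^ m) ys ! 0) \<le> \<delta>" for m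
    using close by (intro dist_funpow_barycentric_le[OF ne xs ys]) simp_all
  then show "dist (beta_limit k mu xs) (beta_limit k mu ys) \<le> \<delta>"
    by (intro dist_beta_limit_le[OF mu r xs ys] always_eventually allI)
qed

lemma coord_contractive_list_beta_limit:
  fixes mu :: "'a::complete_space list \<Rightarrow> 'a"
  assumes mu: "contractive_kmean k r mu" and r: "0 \<le> r" "r < 1"
  shows "coord_contractive_list (Suc k) r (beta_limit k mu)"
  unfolding coord_contractive_list_def
proof (intro allI impI)
  fix xs :: "'a list" and p :: nat and y :: 'a
  assume xs: "length xs = Suc k" and p: "p < Suc k"
  let ?ys = "xs[p := y]"
  have ne: "nonexpansive_list k mu" and cc: "coord_contractive_list k r mu"
    using mu by (simp_all add: contractive_kmean_def)
  have first_step: "dist (barycentric k mu xs ! j) (barycentric k mu ?ys ! j) \<le> r * dist (xs ! p) y"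
    if "j < Suc k" for j
    using cc r(1) xs p that by (rule dist_barycentric_list_update_le)
  have "dist ((barycentric k mu ^^ m) xs ! 0) ((barycentric k mu ^^ m) ?ys ! 0) \<le> r * dist (xs ! p) y"
    if m: "1 \<le> m" for m
  proof -
    obtain m' where "m = Suc m'"
      by (cases m) (use m in auto)
    then show ?thesis
      using dist_funpow_barycentric_le[OF ne _ _ first_step, of 0 m']
      by (simp add: funpow_Suc_right del: funpow.simps)
  qed
  then show "dist (beta_limit k mu xs) (beta_limit k mu ?ys) \<le> r * dist (xs ! p) y"
    using xs by (intro dist_beta_limit_le[OF mu r] eventually_sequentiallyI) simp_all
qed

lemma contractive_kmean_beta_limit:
  fixes mu :: "'a::complete_space list \<Rightarrow> 'a"
  assumes "contractive_kmean k r mu" "0 \<le> r" "r < 1"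
  shows "contractive_kmean (Suc k) r (beta_limit k mu)"
  using assms(1) nonexpansive_list_beta_limit[OF assms] coord_contractive_list_beta_limit[OF assms]
  by (simp add: contractive_kmean_def kmean_beta_limit)

fun beta_tower :: "('a::metric_space list \<Rightarrow> 'a) \<Rightarrow> nat \<Rightarrow> 'a list \<Rightarrow> 'a" where
  "beta_tower mu 0 = mu"
| "beta_tower mu (Suc i) = beta_limit (Suc (Suc i)) (beta_tower mu i)"

lemma contractive_kmean_beta_tower:
  fixes mu :: "'a::complete_space list \<Rightarrow> 'a"
  assumes "contractive_kmean 2 r mu" "0 \<le> r" "r < 1"
  shows "contractive_kmean (Suc (Suc i)) r (beta_tower mu i)"
proof (induction i)
  case 0
  then show ?case
    using assms(1) by (simp add: numeral_2_eq_2)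
next
  case (Suc i)
  then show ?case
    using contractive_kmean_beta_limit[OF Suc assms(2,3)] by simp
qed

lemma beta_extends_all_if_contractive_mean2:
  fixes mu :: "'a::complete_space \<Rightarrow> 'a \<Rightarrow> 'a"
  assumes "contractive_mean2 r mu" "0 \<le> r" "r < 1"
  shows "beta_extends_all mu"
proof -
  let ?T = "beta_tower (list_of_mean2 mu)"
  have two: "contractive_kmean 2 r (list_of_mean2 mu)"
    using assms(1) by (rule contractive_kmean_list_of_mean2)
  have ext: "beta_extends (Suc (Suc i)) (?T i) (?T (Suc i))" for i
    using beta_extends_beta_limit[OF contractive_kmean_beta_tower[OF two assms(2,3)] assms(2,3)]
    by simp
  show ?thesis
    unfolding beta_extends_all_def
  proof (intro exI[where x = "\<lambda>n. ?T (n - 2)"] conjI allI impI)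
    show "beta_extends 2 (list_of_mean2 mu) (?T (3 - 2))"
      using ext[of 0] by (simp add: numeral_2_eq_2 numeral_3_eq_3)
    show "beta_extends n (?T (n - 2)) (?T (Suc n - 2))" if "3 \<le> n" for n
    proof -
      have "Suc (Suc (n - 2)) = n" "Suc (n - 2) = Suc n - 2"
        using that by simp_all
      then show ?thesis
        using ext[of "n - 2"] by metis
    qed
  qed
qed

theorem proposition6p4:
  fixes lam nu :: "'a::complete_space \<Rightarrow> 'a \<Rightarrow> 'a" and \<rho>' :: real
  assumes "convex_mean lam"
    and "mean2 nu" and "nonexpansive2 nu" and "0 < \<rho>'" and "\<rho>' < 1"
    and "coord_contractive2 \<rho>' nu"
  shows "(\<exists>mu. is_iter_limit (itcomp lam nu) mu \<and> mean2 mu \<and> nonexpansive2 mu \<and>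
             coord_contractive2 (max (1/2) \<rho>') mu \<and> beta_extends_all mu)
       \<and> (\<exists>mu. is_iter_limit (itcomp_skew lam nu) mu \<and> mean2 mu \<and> nonexpansive2 mu \<and>
             coord_contractive2 (max (1/2) \<rho>') mu \<and> beta_extends_all mu)"
proof -
  define \<rho> where "\<rho> = max (1/2) \<rho>'"
  have \<rho>: "0 \<le> \<rho>" "\<rho> < 1"
    using assms(5) by (auto simp: \<rho>_def)
  have lam: "contractive_mean2 \<rho> lam"
    using convex_mean_imp_contractive_mean2[OF assms(1)] by (rule contractive_mean2_mono) (simp add: \<rho>_def)
  have "contractive_mean2 \<rho>' nu"
    using assms(2,3,6) by (simp add: contractive_mean2_def)
  then have nu: "contractive_mean2 \<rho> nu"
    by (rule contractive_mean2_mono) (simp add: \<rho>_def)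
  have limit_props: "mean2 mu \<and> nonexpansive2 mu \<and> coord_contractive2 \<rho> mu \<and> beta_extends_all mu"
    if "contractive_mean2 \<rho> mu" for mu :: "'a \<Rightarrow> 'a \<Rightarrow> 'a"
    using that beta_extends_all_if_contractive_mean2[OF that \<rho>] by (simp add: contractive_mean2_def)
  obtain mu where "is_iter_limit (itcomp lam nu) mu" "contractive_mean2 \<rho> mu"
    using itcomp_iter_limit[OF lam nu \<rho>] by blast
  moreover obtain mu_skew where "is_iter_limit (itcomp_skew lam nu) mu_skew" "contractive_mean2 \<rho> mu_skew"
    using itcomp_skew_iter_limit[OF lam nu \<rho>] by blast
  ultimately show ?thesis
    unfolding \<rho>_def[symmetric] using limit_props by blast
qed

end
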